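(* Let $m\ge 2$, $d\ge1$ be integers, $n=md$, $a,c>0$. Let $G$ be the $n\times n$ matrix with $G_{ij}=\frac{n^2-1-6|i-j|(n-|i-j|)}{12cn}$ and let $s=-a\sum_{k=1}^m e_{1+(k-1)d}\in\mathbb R^n$. Then for all $i=1,\dots,d$ and $k=1,\dots,m$, $$(Gs)_{i+(k-1)d}=\mathsf n_i:=-\frac{a}{12cn}\Bigl(n(6+d)+5m+6mi(i-d-2)\Bigr),$$ i.e. $Gs$ is the vector $(\mathsf n,\mathsf n,\dots,\mathsf n)$ consisting of $m$ copies of $\mathsf n=(\mathsf n_1,\dots,\mathsf n_d)$. Moreover, with $\Pi$ the $n\times\binom m2$ matrix whose columns are $\sqrt{a/m}\,(e_{1+(i-1)d}-e_{1+(j-1)d})$, $1\le i<j\le m$, and $M=G-G\Pi(I+\Pi^\top G\Pi)^{-1}\Pi^\top G$, one has $Ms=Gs$.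
   Context: $e_j$ is the $j$-th standard basis vector of $\mathbb R^n$; $I$ is the identity of size $\binom m2$. ($G$ is the group inverse of the Laplacian of the $n$-cycle with all conductances $c$.) *)

theory Defs
  imports "Jordan_Normal_Form.Matrix"
begin

(* All matrices/vectors are Jordan_Normal_Form objects, indexed from 0.
   Paper index p (1-based) corresponds to index p-1 here. *)

definition Gmat :: "real \<Rightarrow> nat \<Rightarrow> nat \<Rightarrow> real mat" where
  "Gmat c m d = (let n = m * d in
     mat n n (\<lambda>(i, j). let t = \<bar>real i - real j\<bar> in
        (real n ^ 2 - 1 - 6 * t * (real n - t)) / (12 * c * real n)))"

definition svec :: "real \<Rightarrow> nat \<Rightarrow> nat \<Rightarrow> real vec" where
  "svec a m d = vec (m * d) (\<lambda>r. if \<exists>k<m. r = k * d then - a else 0)"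

definition pairs_list :: "nat \<Rightarrow> (nat \<times> nat) list" where
  "pairs_list m = [(i, j). i \<leftarrow> [0..<m], j \<leftarrow> [Suc i..<m]]"

definition Pimat :: "real \<Rightarrow> nat \<Rightarrow> nat \<Rightarrow> real mat" where
  "Pimat a m d = mat (m * d) (m choose 2) (\<lambda>(r, col).
     (case pairs_list m ! col of (i, j) \<Rightarrow>
        sqrt (a / real m) * (unit_vec (m * d) (i * d) $ r - unit_vec (m * d) (j * d) $ r)))"

(* the quantity n_i of the paper (i 1-based) *)
definition nval :: "real \<Rightarrow> real \<Rightarrow> nat \<Rightarrow> nat \<Rightarrow> nat \<Rightarrow> real" where
  "nval a c m d i = - a / (12 * c * real (m * d)) *
     (real (m * d) * (6 + real d) + 5 * real m + 6 * real m * real i * (real i - real d - 2))"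

end

theory Submission
  imports Defs "Jordan_Normal_Form.Determinant"
begin

text \<open>\<open>G\<close> is circulant: its entry at \<open>(x, y)\<close> depends only on \<open>T (n - T)\<close> with
  \<open>T = (x - y) mod n\<close>. Since \<open>s\<close> is supported on the multiples of \<open>d\<close>, the entry of \<open>G s\<close>
  at position \<open>i + k d\<close> is a sum over one full period that does not depend on \<open>k\<close>; summing
  \<open>j\<close> and \<open>j\<^sup>2\<close> gives \<open>n\<^sub>i\<close>. So \<open>G s\<close> is constant on the support of \<open>s\<close>, whence
  \<open>\<Pi>\<^sup>T G s = 0\<close> and the correction term of \<open>M\<close> vanishes on \<open>s\<close>.
  The matrix \<open>I + \<Pi>\<^sup>T G \<Pi>\<close> is invertible because \<open>G\<close> is positive semidefinite on vectors of
  zero sum, which contain the range of \<open>\<Pi>\<close>: the kernel \<open>t (n - t)\<close>, \<open>t = |x - y|\<close>, is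
  conditionally negative definite.\<close>

lemma sum_sum_mult_sq_diff:
  fixes u f :: "'i \<Rightarrow> real"
  shows "(\<Sum>x\<in>I. \<Sum>y\<in>I. u x * u y * (f x - f y)^2) =
     2 * (\<Sum>x\<in>I. u x) * (\<Sum>x\<in>I. u x * f x ^ 2) - 2 * (\<Sum>x\<in>I. u x * f x)^2"
proof -
  have "(\<Sum>x\<in>I. \<Sum>y\<in>I. u x * u y * (f x - f y)^2) =
     (\<Sum>x\<in>I. \<Sum>y\<in>I. (u x * f x ^ 2) * u y + u x * (u y * f y ^ 2) - 2 * ((u x * f x) * (u y * f y)))"
    by (intro sum.cong refl) (simp add: power2_eq_square algebra_simps)
  also have "\<dots> = 2 * (\<Sum>x\<in>I. u x) * (\<Sum>x\<in>I. u x * f x ^ 2) - 2 * (\<Sum>x\<in>I. u x * f x)^2"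
  proof -
    have "(\<Sum>x\<in>I. \<Sum>y\<in>I. (u x * f x ^ 2) * u y) = (\<Sum>x\<in>I. u x * f x ^ 2) * (\<Sum>x\<in>I. u x)"
      by (simp add: sum_product)
    moreover have "(\<Sum>x\<in>I. \<Sum>y\<in>I. u x * (u y * f y ^ 2)) = (\<Sum>x\<in>I. u x) * (\<Sum>x\<in>I. u x * f x ^ 2)"
      by (simp add: sum_product)
    moreover have "(\<Sum>x\<in>I. \<Sum>y\<in>I. 2 * ((u x * f x) * (u y * f y))) = 2 * (\<Sum>x\<in>I. u x * f x)^2"
      by (simp add: power2_eq_square sum_product flip: sum_distrib_left)
    ultimately show ?thesis
      by (simp only: sum.distrib sum_subtractf) (simp add: algebra_simps)
  qed
  finally show ?thesis .
qed

lemma sum_sum_mult_sq_diff_of_sum_eq_0: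
  fixes u f :: "'i \<Rightarrow> real"
  assumes "(\<Sum>x\<in>I. u x) = 0"
  shows "(\<Sum>x\<in>I. \<Sum>y\<in>I. u x * u y * (f x - f y)^2) = - 2 * (\<Sum>x\<in>I. u x * f x)^2"
  using sum_sum_mult_sq_diff[of u f I] assms by simp

lemma square_sum_le_card_mult_sum_squares:
  fixes f :: "'i \<Rightarrow> real"
  shows "(\<Sum>x\<in>I. f x)^2 \<le> real (card I) * (\<Sum>x\<in>I. f x ^ 2)"
proof -
  have "0 \<le> (\<Sum>x\<in>I. \<Sum>y\<in>I. 1 * 1 * (f x - f y)^2)"
    by (intro sum_nonneg) auto
  then show ?thesis
    using sum_sum_mult_sq_diff[of "\<lambda>_. 1" f I] by simp
qed

lemma abs_diff_eq_sum_sq_diff_of_bool: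
  assumes "x < n" "y < n"
  shows "\<bar>real x - real y\<bar> = (\<Sum>e<n. (of_bool (x \<le> e) - of_bool (y \<le> e))^2)"
proof -
  have "(\<Sum>e<n. (of_bool (x \<le> e) - of_bool (y \<le> e) :: real)^2)
      = (\<Sum>e<n. of_bool (x \<le> e \<and> e < y) + of_bool (y \<le> e \<and> e < x))"
    by (intro sum.cong refl) auto
  also have "\<dots> = real (card {x..<y}) + real (card {y..<x})"
  proof -
    have "{..<n} \<inter> {e. x \<le> e \<and> e < y} = {x..<y}" "{..<n} \<inter> {e. y \<le> e \<and> e < x} = {y..<x}"
      using assms by auto
    then show ?thesis
      by (simp add: sum.distrib)
  qed
  also have "\<dots> = \<bar>real x - real y\<bar>"
    by (cases "x \<le> y") (auto simp: of_nat_diff)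
  finally show ?thesis ..
qed

lemma real_eq_sum_of_bool_less:
  assumes "x \<le> n"
  shows "real x = (\<Sum>e<n. of_bool (e < x))"
  using assms by (simp add: Int_absorb1 flip: sum.inter_restrict lessThan_def)

lemma sum_sum_mult_abs_diff_of_sum_eq_0:
  fixes w :: "nat \<Rightarrow> real"
  assumes "(\<Sum>x<n. w x) = 0"
  shows "(\<Sum>x<n. \<Sum>y<n. w x * w y * \<bar>real x - real y\<bar>)
    = - 2 * (\<Sum>e<n. (\<Sum>x<n. w x * of_bool (x \<le> e))^2)"
proof -
  have "(\<Sum>x<n. \<Sum>y<n. w x * w y * \<bar>real x - real y\<bar>)
      = (\<Sum>x<n. \<Sum>y<n. \<Sum>e<n. w x * w y * (of_bool (x \<le> e) - of_bool (y \<le> e))^2)"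
    by (intro sum.cong refl) (simp add: abs_diff_eq_sum_sq_diff_of_bool sum_distrib_left)
  also have "\<dots> = (\<Sum>x<n. \<Sum>e<n. \<Sum>y<n. w x * w y * (of_bool (x \<le> e) - of_bool (y \<le> e))^2)"
    by (intro sum.cong refl sum.swap)
  also have "\<dots> = (\<Sum>e<n. \<Sum>x<n. \<Sum>y<n. w x * w y * (of_bool (x \<le> e) - of_bool (y \<le> e))^2)"
    by (rule sum.swap)
  also have "\<dots> = (\<Sum>e<n. - 2 * (\<Sum>x<n. w x * of_bool (x \<le> e))^2)"
    using assms by (simp only: sum_sum_mult_sq_diff_of_sum_eq_0)
  finally show ?thesis
    by (simp add: sum_distrib_left)
qed

lemma sum_mult_real_of_sum_eq_0:
  fixes w :: "nat \<Rightarrow> real"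
  assumes "(\<Sum>x<n. w x) = 0"
  shows "(\<Sum>x<n. w x * real x) = - (\<Sum>e<n. \<Sum>x<n. w x * of_bool (x \<le> e))"
proof -
  have "(\<Sum>x<n. w x * real x) = (\<Sum>x<n. \<Sum>e<n. w x - w x * of_bool (x \<le> e))"
  proof (intro sum.cong refl)
    fix x assume "x \<in> {..<n}"
    then have "w x * real x = (\<Sum>e<n. w x * of_bool (e < x))"
      by (subst real_eq_sum_of_bool_less[of x n]) (auto simp only: sum_distrib_left)
    also have "\<dots> = (\<Sum>e<n. w x - w x * of_bool (x \<le> e))"
      by (intro sum.cong refl) auto
    finally show "w x * real x = (\<Sum>e<n. w x - w x * of_bool (x \<le> e))" .
  qed
  also have "\<dots> = - (\<Sum>e<n. \<Sum>x<n. w x * of_bool (x \<le> e))"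
    using assms by (subst sum.swap) (simp add: sum_subtractf sum_negf)
  finally show ?thesis .
qed

text \<open>Writing \<open>|x - y|\<close> as the sum of the layers \<open>([x \<le> e] - [y \<le> e])\<^sup>2\<close> and \<open>W e\<close> for
  the partial sums of \<open>w\<close>, the form equals \<open>2 (\<Sum> W)\<^sup>2 - 2 n \<Sum> W\<^sup>2\<close>, which is \<open>\<le> 0\<close> by
  Cauchy--Schwarz.\<close>

lemma circular_kernel_conditionally_negative:
  fixes w :: "nat \<Rightarrow> real"
  assumes "(\<Sum>x<n. w x) = 0"
  shows "(\<Sum>x<n. \<Sum>y<n. w x * w y * (\<bar>real x - real y\<bar> * (real n - \<bar>real x - real y\<bar>))) \<le> 0"
proof -
  define W where "W e = (\<Sum>x<n. w x * of_bool (x \<le> e))" for e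
  have abs: "(\<Sum>x<n. \<Sum>y<n. w x * w y * \<bar>real x - real y\<bar>) = - 2 * (\<Sum>e<n. W e ^ 2)"
    unfolding W_def using assms by (rule sum_sum_mult_abs_diff_of_sum_eq_0)
  have sq: "(\<Sum>x<n. \<Sum>y<n. w x * w y * (real x - real y)^2) = - 2 * (\<Sum>e<n. W e)^2"
    using sum_sum_mult_sq_diff_of_sum_eq_0[OF assms, of real] sum_mult_real_of_sum_eq_0[OF assms]
    unfolding W_def by simp
  have pointwise: "w x * w y * (\<bar>real x - real y\<bar> * (real n - \<bar>real x - real y\<bar>))
      = real n * (w x * w y * \<bar>real x - real y\<bar>) - w x * w y * (real x - real y)^2" for x y
  proof -
    have "\<bar>real x - real y\<bar> * \<bar>real x - real y\<bar> = (real x - real y)^2"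
      by (simp add: power2_eq_square)
    then show ?thesis
      by (simp add: right_diff_distrib)
  qed
  have "(\<Sum>x<n. \<Sum>y<n. w x * w y * (\<bar>real x - real y\<bar> * (real n - \<bar>real x - real y\<bar>)))
      = real n * (\<Sum>x<n. \<Sum>y<n. w x * w y * \<bar>real x - real y\<bar>)
        - (\<Sum>x<n. \<Sum>y<n. w x * w y * (real x - real y)^2)"
    by (simp only: pointwise sum_subtractf sum_distrib_left)
  also have "\<dots> = 2 * (\<Sum>e<n. W e)^2 - 2 * real n * (\<Sum>e<n. W e ^ 2)"
    unfolding abs sq by simp
  also have "\<dots> \<le> 0"
    using square_sum_le_card_mult_sum_squares[of W "{..<n}"] by simp
  finally show ?thesis .
qed

lemma mult_mat_vec_nth_eq_sum:
  assumes "A \<in> carrier_mat nr nc" "v \<in> carrier_vec nc" "i < nr"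
  shows "(A *\<^sub>v v) $ i = (\<Sum>j<nc. A $$ (i, j) * v $ j)"
  using assms by (auto simp: scalar_prod_def atLeast0LessThan)

lemma abs_diff_mult_complement_eq_mod:
  fixes x y n :: nat
  assumes "x < n" "y < n"
  shows "\<bar>real x - real y\<bar> * (real n - \<bar>real x - real y\<bar>)
    = real ((x + n - y) mod n) * (real n - real ((x + n - y) mod n))"
proof (cases "y \<le> x")
  case True
  then have "(x + n - y) mod n = x - y"
    using assms by (simp add: mod_if)
  with True show ?thesis
    by simp
next
  case False
  then have "(x + n - y) mod n = x + n - y"
    using assms by simp
  with False assms show ?thesis
    by (simp add: algebra_simps)
qed

lemma add_mult_diff_mod_mult:
  fixes i k l m d :: nat
  assumes "i < d" "l < m"
  shows "(i + k * d + m * d - l * d) mod (m * d) = i + ((k + m - l) mod m) * d"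
proof -
  have "l * d \<le> m * d"
    using assms(2) by simp
  then have "i + k * d + m * d - l * d = i + (k * d + m * d - l * d)"
    by linarith
  also have "\<dots> = i + (k + m - l) * d"
    by (simp add: diff_mult_distrib add_mult_distrib)
  finally show ?thesis
    using assms(1) by (simp add: mod_mult2_eq[of _ d m, simplified mult.commute[of d m]])
qed

lemma sum_reflect_mod:
  fixes k m :: nat
  assumes "k < m"
  shows "(\<Sum>l<m. g ((k + m - l) mod m)) = (\<Sum>j<m. g j)"
proof (rule sum.reindex_bij_betw)
  have "(k + m - l) mod m = (if l \<le> k then k - l else k + m - l)" if "l < m" for l
    using that assms by (auto simp: mod_if)
  then have inj: "inj_on (\<lambda>l. (k + m - l) mod m) {..<m}"
    using assms by (auto simp: inj_on_def split: if_splits)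
  moreover have "(\<lambda>l. (k + m - l) mod m) ` {..<m} \<subseteq> {..<m}"
    using assms by auto
  ultimately show "bij_betw (\<lambda>l. (k + m - l) mod m) {..<m} {..<m}"
    by (simp add: bij_betw_def endo_inj_surj)
qed

lemma Gmat_carrier: "Gmat c m d \<in> carrier_mat (m * d) (m * d)"
  by (simp add: Gmat_def Let_def)

lemma Gmat_index:
  assumes "x < m * d" "y < m * d"
  shows "Gmat c m d $$ (x, y) =
    (real (m * d) ^ 2 - 1 - 6 * \<bar>real x - real y\<bar> * (real (m * d) - \<bar>real x - real y\<bar>))
      / (12 * c * real (m * d))"
  using assms by (simp add: Gmat_def Let_def)

lemma svec_carrier: "svec a m d \<in> carrier_vec (m * d)"
  by (simp add: svec_def)

lemma mult_svec_nth:
  assumes "A \<in> carrier_mat nr (m * d)" "r < nr" "d \<ge> 1"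
  shows "(A *\<^sub>v svec a m d) $ r = - a * (\<Sum>l<m. A $$ (r, l * d))"
proof -
  have support: "(\<lambda>l. l * d) ` {..<m} \<subseteq> {..<m * d}"
    using assms(3) by auto
  have "(A *\<^sub>v svec a m d) $ r = (\<Sum>j<m * d. A $$ (r, j) * svec a m d $ j)"
    by (rule mult_mat_vec_nth_eq_sum[OF assms(1) svec_carrier assms(2)])
  also have "\<dots> = (\<Sum>j\<in>(\<lambda>l. l * d) ` {..<m}. A $$ (r, j) * (- a))"
    using support by (intro sum.mono_neutral_cong_right) (auto simp: svec_def)
  also have "\<dots> = - a * (\<Sum>l<m. A $$ (r, l * d))"
    using assms(3) by (subst sum.reindex) (auto simp: inj_on_def sum_distrib_left mult.commute)
  finally show ?thesis .
qed

lemma Gmat_mult_svec_eq_sum: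
  assumes "d \<ge> 1" "i < d" "k < m"
  shows "(Gmat c m d *\<^sub>v svec a m d) $ (i + k * d) = - a * (\<Sum>j<m.
    (real (m * d) ^ 2 - 1 - 6 * real (i + j * d) * (real (m * d) - real (i + j * d))) / (12 * c * real (m * d)))"
proof -
  define n where "n = m * d"
  define h where "h T = (real n ^ 2 - 1 - 6 * real T * (real n - real T)) / (12 * c * real n)" for T
  have "i + k * d < d + k * d"
    using assms(2) by simp
  also have "\<dots> \<le> n"
    using assms(3) by (simp add: n_def mult_le_mono1 flip: mult_Suc)
  finally have row: "i + k * d < n" .
  have "(Gmat c m d *\<^sub>v svec a m d) $ (i + k * d) = - a * (\<Sum>l<m. Gmat c m d $$ (i + k * d, l * d))"
    using mult_svec_nth[OF Gmat_carrier, where r = "i + k * d" and a = a] row assms(1) by (simp add: n_def)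
  also have "\<dots> = - a * (\<Sum>l<m. h (i + ((k + m - l) mod m) * d))"
  proof (intro arg_cong[where f = "\<lambda>x. - a * x"] sum.cong refl)
    fix l assume "l \<in> {..<m}"
    then have col: "l * d < n"
      using assms(1) by (simp add: n_def)
    have "(i + k * d + n - l * d) mod n = i + ((k + m - l) mod m) * d"
      unfolding n_def using assms(2) \<open>l \<in> {..<m}\<close> by (simp add: add_mult_diff_mod_mult)
    then have "\<bar>real (i + k * d) - real (l * d)\<bar> * (real n - \<bar>real (i + k * d) - real (l * d)\<bar>)
        = real (i + ((k + m - l) mod m) * d) * (real n - real (i + ((k + m - l) mod m) * d))"
      using abs_diff_mult_complement_eq_mod[OF row col] by simp
    then show "Gmat c m d $$ (i + k * d, l * d) = h (i + ((k + m - l) mod m) * d)"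
      using row col unfolding h_def n_def by (simp add: Gmat_index mult.assoc)
  qed
  also have "\<dots> = - a * (\<Sum>j<m. h (i + j * d))"
    using assms(3) by (simp only: sum_reflect_mod[where g = "\<lambda>j. h (i + j * d)"])
  finally show ?thesis
    by (simp add: h_def n_def)
qed

lemma sum_lessThan_quadratic:
  "(\<Sum>j<m. A + B * real j + C * real j ^ 2)
    = A * real m + B * real m * (real m - 1) / 2 + C * (real m - 1) * real m * (2 * real m - 1) / 6"
  by (induction m) (simp_all add: field_simps power2_eq_square)

lemma Gmat_mult_svec_nth:
  assumes "d \<ge> 1" "i < d" "k < m"
  shows "(Gmat c m d *\<^sub>v svec a m d) $ (i + k * d) = nval a c m d (Suc i)"
proof -
  define n where "n = real (m * d)"
  have expand: "real (m * d) ^ 2 - 1 - 6 * real (i + j * d) * (real (m * d) - real (i + j * d))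
      = (n ^ 2 - 1 - 6 * real i * (n - real i)) + (- 6 * real d * (n - 2 * real i)) * real j
        + (6 * real d ^ 2) * real j ^ 2" for j
    by (simp add: n_def algebra_simps power2_eq_square)
  have "(Gmat c m d *\<^sub>v svec a m d) $ (i + k * d) = - a * (\<Sum>j<m.
      ((n ^ 2 - 1 - 6 * real i * (n - real i)) + (- 6 * real d * (n - 2 * real i)) * real j
        + (6 * real d ^ 2) * real j ^ 2) / (12 * c * n))"
    using assms by (simp only: Gmat_mult_svec_eq_sum expand n_def)
  also have "\<dots> = - a / (12 * c * n) * (\<Sum>j<m.
      (n ^ 2 - 1 - 6 * real i * (n - real i)) + (- 6 * real d * (n - 2 * real i)) * real j
        + (6 * real d ^ 2) * real j ^ 2)"
    by (simp flip: sum_divide_distrib)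
  also have "(\<Sum>j<m. (n ^ 2 - 1 - 6 * real i * (n - real i)) + (- 6 * real d * (n - 2 * real i)) * real j
        + (6 * real d ^ 2) * real j ^ 2)
      = n * (6 + real d) + 5 * real m + 6 * real m * real (Suc i) * (real (Suc i) - real d - 2)"
    unfolding sum_lessThan_quadratic n_def by (simp add: field_simps power2_eq_square)
  finally show ?thesis
    by (simp add: nval_def n_def)
qed

lemma length_pairs_list: "length (pairs_list m) = m choose 2"
proof -
  have "length (pairs_list m) = (\<Sum>i<m. m - Suc i)"
    by (simp add: pairs_list_def length_concat o_def atLeast0LessThan
        flip: sum_set_upt_conv_sum_list_nat)
  also have "\<dots> = (\<Sum>i<m. i)"
    by (rule sum.nat_diff_reindex)
  also have "\<dots> = m choose 2"
  proof (cases m)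
    case (Suc k)
    have "(\<Sum>i\<le>k. i) = Suc k choose 2"
      using sum_choose_upper[where m = 1 and n = k] by (simp only: choose_one Suc_1)
    with Suc show ?thesis
      by (simp add: lessThan_Suc_atMost)
  qed simp
  finally show ?thesis .
qed

lemma pairs_list_nth_mem:
  assumes "p < m choose 2"
  shows "pairs_list m ! p \<in> {(i, j). i < j \<and> j < m}"
proof -
  have "pairs_list m ! p \<in> set (pairs_list m)"
    using assms by (simp add: length_pairs_list)
  then show ?thesis
    by (auto simp: pairs_list_def)
qed

lemma Pimat_carrier: "Pimat a m d \<in> carrier_mat (m * d) (m choose 2)"
  by (simp add: Pimat_def)

lemma transpose_Pimat_mult_vec_nth:
  assumes "d \<ge> 1" "v \<in> carrier_vec (m * d)" "p < m choose 2" "pairs_list m ! p = (i, j)"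
  shows "((Pimat a m d)\<^sup>T *\<^sub>v v) $ p = sqrt (a / real m) * (v $ (i * d) - v $ (j * d))"
proof -
  have ij: "i * d < m * d" "j * d < m * d"
    using pairs_list_nth_mem[OF assms(3)] assms(1,4) by auto
  have "((Pimat a m d)\<^sup>T *\<^sub>v v) $ p = (\<Sum>r<m * d. (Pimat a m d)\<^sup>T $$ (p, r) * v $ r)"
    using assms Pimat_carrier by (intro mult_mat_vec_nth_eq_sum) auto
  also have "\<dots> = (\<Sum>r<m * d. Pimat a m d $$ (r, p) * v $ r)"
    using assms by (intro sum.cong refl) (simp add: Pimat_def)
  also have "\<dots> = (\<Sum>r<m * d. sqrt (a / real m) * (of_bool (r = i * d) * v $ r - of_bool (r = j * d) * v $ r))"
    using assms by (intro sum.cong refl) (auto simp: Pimat_def unit_vec_def)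
  also have "\<dots> = sqrt (a / real m) * (v $ (i * d) - v $ (j * d))"
    using ij by (simp add: sum_subtractf flip: sum_distrib_left)
  finally show ?thesis .
qed

lemma transpose_Pimat_mult_vec_eq_0:
  assumes "d \<ge> 1" "v \<in> carrier_vec (m * d)" "\<And>k. k < m \<Longrightarrow> v $ (k * d) = \<mu>"
  shows "(Pimat a m d)\<^sup>T *\<^sub>v v = 0\<^sub>v (m choose 2)"
proof (rule eq_vecI)
  fix p assume "p < dim_vec (0\<^sub>v (m choose 2))"
  then have p: "p < m choose 2"
    by simp
  obtain i j where "pairs_list m ! p = (i, j)"
    by (cases "pairs_list m ! p")
  with pairs_list_nth_mem[OF p] assms p show "((Pimat a m d)\<^sup>T *\<^sub>v v) $ p = 0\<^sub>v (m choose 2) $ p"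
    by (simp add: transpose_Pimat_mult_vec_nth)
qed (simp add: Pimat_def)

lemma sum_Pimat_mult_vec_eq_0:
  assumes "d \<ge> 1" "v \<in> carrier_vec (m choose 2)"
  shows "(\<Sum>r<m * d. (Pimat a m d *\<^sub>v v) $ r) = 0"
proof -
  let ?one = "vec (m * d) (\<lambda>_. 1) :: real vec"
  have "(\<Sum>r<m * d. (Pimat a m d *\<^sub>v v) $ r) = ?one \<bullet> (Pimat a m d *\<^sub>v v)"
    by (simp add: scalar_prod_def atLeast0LessThan Pimat_def)
  also have "\<dots> = ((Pimat a m d)\<^sup>T *\<^sub>v ?one) \<bullet> v"
    using transpose_vec_mult_scalar[OF Pimat_carrier assms(2), of ?one] by simp
  also have "(Pimat a m d)\<^sup>T *\<^sub>v ?one = 0\<^sub>v (m choose 2)"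
    by (rule transpose_Pimat_mult_vec_eq_0[where \<mu> = 1]) (use assms(1) in auto)
  finally show ?thesis
    using assms(2) by simp
qed

lemma inverts_mat_carrier:
  assumes "A \<in> carrier_mat n n" "inverts_mat A B" "inverts_mat B A"
  shows "B \<in> carrier_mat n n"
proof -
  have "dim_col B = n"
    using assms(1,2) unfolding inverts_mat_def by (metis carrier_matD(1) index_mult_mat(3) index_one_mat(3))
  moreover have "dim_row B = n"
    using assms(1,3) unfolding inverts_mat_def by (metis carrier_matD(2) index_mult_mat(3) index_one_mat(3))
  ultimately show ?thesis
    by auto
qed

lemma invertible_one_plus_transpose_mult_mult:
  fixes P G :: "real mat"
  assumes P: "P \<in> carrier_mat n k" and G: "G \<in> carrier_mat n n"
    and nonneg: "\<And>v. v \<in> carrier_vec k \<Longrightarrow> 0 \<le> (G *\<^sub>v (P *\<^sub>v v)) \<bullet> (P *\<^sub>v v)"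
  shows "invertible_mat (1\<^sub>m k + P\<^sup>T * G * P)"
proof -
  define A where "A = 1\<^sub>m k + P\<^sup>T * G * P"
  have A: "A \<in> carrier_mat k k"
    unfolding A_def using P G by auto
  have "A *\<^sub>v v \<noteq> 0\<^sub>v k" if v: "v \<in> carrier_vec k" "v \<noteq> 0\<^sub>v k" for v
  proof
    assume "A *\<^sub>v v = 0\<^sub>v k"
    have "A *\<^sub>v v = v + (P\<^sup>T * G * P) *\<^sub>v v"
      unfolding A_def using P G v by (subst add_mult_distrib_mat_vec[of _ k k]) auto
    also have "(P\<^sup>T * G * P) *\<^sub>v v = P\<^sup>T *\<^sub>v (G *\<^sub>v (P *\<^sub>v v))"
      using P G v by (subst assoc_mult_mat_vec[of _ k n]) auto
    finally have "A *\<^sub>v v = v + P\<^sup>T *\<^sub>v (G *\<^sub>v (P *\<^sub>v v))" .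
    then have "0 = v \<bullet> v + (P\<^sup>T *\<^sub>v (G *\<^sub>v (P *\<^sub>v v))) \<bullet> v"
      using \<open>A *\<^sub>v v = 0\<^sub>v k\<close> P G v by (metis add_scalar_prod_distrib mult_mat_vec_carrier
          scalar_prod_left_zero transpose_carrier_mat)
    also have "(P\<^sup>T *\<^sub>v (G *\<^sub>v (P *\<^sub>v v))) \<bullet> v = (G *\<^sub>v (P *\<^sub>v v)) \<bullet> (P *\<^sub>v v)"
      using P G v by (intro transpose_vec_mult_scalar) auto
    finally have "v \<bullet> v \<le> 0"
      using nonneg[OF v(1)] by linarith
    then have "v = 0\<^sub>v k"
      using conjugate_square_eq_0_vec[OF v(1)] conjugate_square_ge_0_vec[of v] by simp
    with v(2) show False ..
  qed
  then have "det A \<noteq> 0"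
    unfolding det_0_iff_vec_prod_zero[OF A] by blast
  then obtain B where "B \<in> carrier_mat k k" "B * A = 1\<^sub>m k" "A * B = 1\<^sub>m k"
    using det_non_zero_imp_unit[OF A, of "()"] unfolding Units_def ring_mat_def by auto
  with A show ?thesis
    unfolding A_def[symmetric] invertible_mat_def inverts_mat_def by auto
qed

lemma mult_vec_minus_correction_eq:
  fixes G P B :: "'a :: ring mat"
  assumes "G \<in> carrier_mat n n" "P \<in> carrier_mat n k" "B \<in> carrier_mat k k" "s \<in> carrier_vec n"
    and "P\<^sup>T *\<^sub>v (G *\<^sub>v s) = 0\<^sub>v k"
  shows "(G - G * P * B * P\<^sup>T * G) *\<^sub>v s = G *\<^sub>v s"
proof -
  have "(G * P * B * P\<^sup>T * G) *\<^sub>v s = (G * P * B * P\<^sup>T) *\<^sub>v (G *\<^sub>v s)"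
    using assms(1-4) by (subst assoc_mult_mat_vec[of _ n n]) auto
  also have "\<dots> = (G * P * B) *\<^sub>v (P\<^sup>T *\<^sub>v (G *\<^sub>v s))"
    using assms(1-4) by (subst assoc_mult_mat_vec[of _ n k]) auto
  also have "\<dots> = 0\<^sub>v n"
    unfolding assms(5) using assms(1-3) by auto
  finally have correction: "(G * P * B * P\<^sup>T * G) *\<^sub>v s = 0\<^sub>v n" .
  have "(G - G * P * B * P\<^sup>T * G) *\<^sub>v s = G *\<^sub>v s - (G * P * B * P\<^sup>T * G) *\<^sub>v s"
    using assms(1-4) by (intro minus_mult_distrib_mat_vec) auto
  then show ?thesis
    unfolding correction using assms(1,4) by auto
qed

lemma Gmat_quadratic_form_nonneg:
  assumes "c > 0" "w \<in> carrier_vec (m * d)" "(\<Sum>r<m * d. w $ r) = 0"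
  shows "0 \<le> (Gmat c m d *\<^sub>v w) \<bullet> w"
proof -
  define n where "n = m * d"
  define g where "g x y = \<bar>real x - real y\<bar> * (real n - \<bar>real x - real y\<bar>)" for x y :: nat
  define K\<^sub>0 where "K\<^sub>0 = (real n ^ 2 - 1) / (12 * c * real n)"
  define K where "K = 6 / (12 * c * real n)"
  have entry: "Gmat c m d $$ (x, y) = K\<^sub>0 - K * g x y" if "x < n" "y < n" for x y
    using that by (simp add: Gmat_index n_def g_def K\<^sub>0_def K_def diff_divide_distrib mult.assoc)
  have "(Gmat c m d *\<^sub>v w) \<bullet> w = (\<Sum>x<n. (Gmat c m d *\<^sub>v w) $ x * w $ x)"
    using assms(2) by (simp add: scalar_prod_def atLeast0LessThan n_def)
  also have "\<dots> = (\<Sum>x<n. \<Sum>y<n. K\<^sub>0 * (w $ x * w $ y) - K * (w $ x * w $ y * g x y))"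
    by (intro sum.cong refl)
      (simp add: mult_mat_vec_nth_eq_sum[OF Gmat_carrier assms(2)] n_def entry sum_distrib_left sum_distrib_right algebra_simps)
  also have "\<dots> = K\<^sub>0 * (\<Sum>x<n. \<Sum>y<n. w $ x * w $ y) - K * (\<Sum>x<n. \<Sum>y<n. w $ x * w $ y * g x y)"
    by (simp add: sum_subtractf sum_distrib_left)
  also have "\<dots> = - K * (\<Sum>x<n. \<Sum>y<n. w $ x * w $ y * g x y)"
  proof -
    have "(\<Sum>x<n. \<Sum>y<n. w $ x * w $ y) = (\<Sum>x<n. w $ x) * (\<Sum>y<n. w $ y)"
      by (simp add: sum_product)
    then show ?thesis
      using assms(3) by (simp add: n_def)
  qed
  also have "\<dots> \<ge> 0"
  proof -
    have "(\<Sum>x<n. \<Sum>y<n. w $ x * w $ y * g x y) \<le> 0"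
      unfolding g_def using assms(3) by (intro circular_kernel_conditionally_negative) (simp add: n_def)
    moreover have "K \<ge> 0"
      using assms(1) by (simp add: K_def)
    ultimately show ?thesis
      by (simp add: mult_nonneg_nonpos)
  qed
  finally show ?thesis .
qed

theorem lemma4p7:
  fixes m d :: nat and a c :: real
  assumes "m \<ge> 2" and "d \<ge> 1" and "a > 0" and "c > 0"
  shows "(\<forall>i \<in> {1..d}. \<forall>k \<in> {1..m}.
            (Gmat c m d *\<^sub>v svec a m d) $ ((i - 1) + (k - 1) * d) = nval a c m d i)
       \<and> invertible_mat (1\<^sub>m (m choose 2) + (Pimat a m d)\<^sup>T * Gmat c m d * Pimat a m d)
       \<and> (\<forall>B. inverts_mat (1\<^sub>m (m choose 2) + (Pimat a m d)\<^sup>T * Gmat c m d * Pimat a m d) B \<and> inverts_mat B (1\<^sub>m (m choose 2) + (Pimat a m d)\<^sup>T * Gmat c m d * Pimat a m d) \<longrightarrow>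
            (Gmat c m d - Gmat c m d * Pimat a m d * B * (Pimat a m d)\<^sup>T * Gmat c m d)
               *\<^sub>v svec a m d = Gmat c m d *\<^sub>v svec a m d)"
proof -
  let ?G = "Gmat c m d" and ?P = "Pimat a m d" and ?s = "svec a m d" and ?N = "m choose 2"
  have entries: "\<forall>i \<in> {1..d}. \<forall>k \<in> {1..m}. (?G *\<^sub>v ?s) $ ((i - 1) + (k - 1) * d) = nval a c m d i"
  proof (intro ballI)
    fix i k assume "i \<in> {1..d}" "k \<in> {1..m}"
    then have "i - 1 < d" "k - 1 < m" "Suc (i - 1) = i"
      by auto
    then show "(?G *\<^sub>v ?s) $ ((i - 1) + (k - 1) * d) = nval a c m d i"
      by (metis Gmat_mult_svec_nth[OF assms(2)])
  qed
  have annihilated: "?P\<^sup>T *\<^sub>v (?G *\<^sub>v ?s) = 0\<^sub>v ?N"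
    by (rule transpose_Pimat_mult_vec_eq_0[OF assms(2) mult_mat_vec_carrier[OF Gmat_carrier svec_carrier]])
      (use Gmat_mult_svec_nth[OF assms(2), of 0] assms(2) in simp)
  have invertible: "invertible_mat (1\<^sub>m ?N + ?P\<^sup>T * ?G * ?P)"
    by (rule invertible_one_plus_transpose_mult_mult[OF Pimat_carrier Gmat_carrier])
      (use assms in \<open>auto intro!: Gmat_quadratic_form_nonneg sum_Pimat_mult_vec_eq_0
         mult_mat_vec_carrier[OF Pimat_carrier]\<close>)
  have "(?G - ?G * ?P * B * ?P\<^sup>T * ?G) *\<^sub>v ?s = ?G *\<^sub>v ?s"
    if "inverts_mat (1\<^sub>m ?N + ?P\<^sup>T * ?G * ?P) B" "inverts_mat B (1\<^sub>m ?N + ?P\<^sup>T * ?G * ?P)" for B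
  proof (rule mult_vec_minus_correction_eq[OF Gmat_carrier Pimat_carrier _ svec_carrier annihilated])
    show "B \<in> carrier_mat ?N ?N"
      using that by (rule inverts_mat_carrier[rotated]) (use Pimat_carrier[of a m d] Gmat_carrier[of c m d] in auto)
  qed
  with entries invertible show ?thesis
    by blast
qed

end
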